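(* Let $G$ be a graph with $n$ nodes and graph Laplacian $\mathbf{L}$. Then a matrix $\mathbf{P}\in\mathbb{R}^{n\times d}$ is node- and adjacency-identifying if $\mathbf{L}=\mathbf{P}\mathbf{P}^T$.
   Context: Graphs are finite, undirected, without self-loops and without isolated nodes; $\mathbf{L}=\mathbf{D}-\mathbf{A}(G)$ with $\mathbf{D}$ the degree matrix and $\mathbf{A}(G)$ the adjacency matrix; $d_k>0$ is a fixed constant. For $\mathbf{W}^Q,\mathbf{W}^K\in\mathbb{R}^{d\times d}$ put $\tilde{\mathbf{P}}=\frac{1}{\sqrt{d_k}}\mathbf{P}\mathbf{W}^Q(\mathbf{P}\mathbf{W}^K)^T$. $\mathbf{P}$ is node-identifying if for some $\mathbf{W}^Q,\mathbf{W}^K$: $\tilde{\mathbf{P}}_{ij}=\max_k\tilde{\mathbf{P}}_{ik}\iff i=j$; adjacency-identifying if for some (possibly different) $\mathbf{W}^Q,\mathbf{W}^K$: $\tilde{\mathbf{P}}_{ij}=\max_k\tilde{\mathbf{P}}_{ik}\iff\mathbf{A}(G)_{ij}=1$. *)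

theory Defs
  imports "HOL-Analysis.Analysis"
begin

definition graph :: "('n::finite \<Rightarrow> 'n \<Rightarrow> bool) \<Rightarrow> bool" where
  "graph E \<longleftrightarrow> (\<forall>i j. E i j \<longrightarrow> E j i) \<and> (\<forall>i. \<not> E i i) \<and> (\<forall>i. \<exists>j. E i j)"

definition adjacency_matrix :: "('n::finite \<Rightarrow> 'n \<Rightarrow> bool) \<Rightarrow> real^'n^'n" where
  "adjacency_matrix E = (\<chi> i j. if E i j then 1 else 0)"

definition degree_matrix :: "('n::finite \<Rightarrow> 'n \<Rightarrow> bool) \<Rightarrow> real^'n^'n" where
  "degree_matrix E = (\<chi> i j. if i = j then real (card {k. E i k}) else 0)"

definition laplacian :: "('n::finite \<Rightarrow> 'n \<Rightarrow> bool) \<Rightarrow> real^'n^'n" where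
  "laplacian E = degree_matrix E - adjacency_matrix E"

definition ptilde :: "real \<Rightarrow> real^'d^'n \<Rightarrow> real^'d^'d \<Rightarrow> real^'d^'d \<Rightarrow> real^'n^'n" where
  "ptilde dk P WQ WK = (1 / sqrt dk) *\<^sub>R ((P ** WQ) ** transpose (P ** WK))"

definition node_identifying :: "real \<Rightarrow> real^'d^'n::finite \<Rightarrow> bool" where
  "node_identifying dk P \<longleftrightarrow> (\<exists>WQ WK. \<forall>i j.
     (ptilde dk P WQ WK $ i $ j = Max (range (\<lambda>k. ptilde dk P WQ WK $ i $ k))) \<longleftrightarrow> i = j)"

definition adjacency_identifying ::
  "('n::finite \<Rightarrow> 'n \<Rightarrow> bool) \<Rightarrow> real \<Rightarrow> real^'d^'n \<Rightarrow> bool" where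
  "adjacency_identifying E dk P \<longleftrightarrow> (\<exists>WQ WK. \<forall>i j.
     (ptilde dk P WQ WK $ i $ j = Max (range (\<lambda>k. ptilde dk P WQ WK $ i $ k)))
       \<longleftrightarrow> adjacency_matrix E $ i $ j = 1)"

end

theory Submission
  imports Defs
begin

text \<open>With \<open>W\<^sup>Q = W\<^sup>K = I\<close> the attention scores are a positive multiple of \<open>L\<close>: in row \<open>i\<close>
  the diagonal entry is \<open>deg i \<ge> 1\<close> while all other entries are \<open>\<le> 0\<close>, so the row maximum
  sits exactly on the diagonal. With \<open>W\<^sup>Q = I, W\<^sup>K = -I\<close> they are a positive multiple of
  \<open>-L = A - D\<close>: off the diagonal row \<open>i\<close> is the indicator of the neighbours of \<open>i\<close>, the
  diagonal entry is negative, and \<open>i\<close> has a neighbour, so the row maximum \<open>1\<close> is attained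
  exactly at the neighbours.\<close>

lemma ptilde_scaled_identity:
  "ptilde dk P (mat 1) (s *\<^sub>R mat 1) = (s / sqrt dk) *\<^sub>R (P ** transpose P)"
  by (simp add: ptilde_def transpose_scalar matrix_scalar_ac scalar_matrix_assoc[symmetric])

lemma laplacian_entry:
  "laplacian E $ i $ j = (if i = j then real (card {k. E i k}) else 0) - (if E i j then 1 else 0)"
  by (simp add: laplacian_def degree_matrix_def adjacency_matrix_def)

lemma graph_degree_ge_1:
  assumes "graph E"
  shows "real (card {k. E i k}) \<ge> 1"
proof -
  obtain j where "E i j" using assms unfolding graph_def by blast
  then have "{k. E i k} \<noteq> {}" by blast
  then show ?thesis by (simp add: Suc_le_eq card_gt_0_iff)
qed

lemma eq_Max_range_iff:
  fixes f :: "'a::finite \<Rightarrow> 'b::linorder"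
  assumes "\<And>k. f k \<le> m" and "f k\<^sub>0 = m"
  shows "f j = Max (range f) \<longleftrightarrow> f j = m"
proof -
  have "Max (range f) = m"
    using assms by (intro Max_eqI) (auto intro: range_eqI[of _ _ k\<^sub>0])
  then show ?thesis by simp
qed

lemma scaled_eq_Max_range_iff:
  fixes f :: "'a::finite \<Rightarrow> real"
  assumes "c > 0"
  shows "c * f j = Max (range (\<lambda>k. c * f k)) \<longleftrightarrow> f j = Max (range f)"
proof -
  have "Max (range (\<lambda>k. c * f k)) = c * Max (range f)"
    using assms mono_Max_commute[of "(*) c" "range f"]
    by (simp add: image_image monoI)
  then show ?thesis using assms by simp
qed

lemma laplacian_row_Max_iff_diagonal:
  assumes "graph E"
  shows "laplacian E $ i $ j = Max (range (\<lambda>k. laplacian E $ i $ k)) \<longleftrightarrow> j = i"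
proof -
  have diag: "laplacian E $ i $ i = real (card {k. E i k})"
    using assms by (simp add: laplacian_entry graph_def)
  have off_diag: "laplacian E $ i $ k \<le> 0" if "k \<noteq> i" for k
    using that by (simp add: laplacian_entry)
  have "laplacian E $ i $ k \<le> laplacian E $ i $ i" for k
    using off_diag[of k] graph_degree_ge_1[OF assms, of i] diag by (cases "k = i") auto
  moreover have "laplacian E $ i $ j = laplacian E $ i $ i \<longleftrightarrow> j = i"
    using off_diag[of j] graph_degree_ge_1[OF assms, of i] diag by force
  ultimately show ?thesis
    using eq_Max_range_iff[of "\<lambda>k. laplacian E $ i $ k" "laplacian E $ i $ i" i j] by simp
qed

lemma neg_laplacian_row_Max_iff_adjacent:
  assumes "graph E"
  shows "- laplacian E $ i $ j = Max (range (\<lambda>k. - laplacian E $ i $ k)) \<longleftrightarrow> E i j"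
proof -
  have irrefl: "\<not> E i i" using assms by (simp add: graph_def)
  obtain j\<^sub>0 where "E i j\<^sub>0" using assms unfolding graph_def by blast
  have entry: "- laplacian E $ i $ k = (if k = i then - real (card {k. E i k})
                                       else if E i k then 1 else 0)" for k
    using irrefl by (simp add: laplacian_entry)
  have "- laplacian E $ i $ k \<le> 1" for k
    by (simp add: entry)
  moreover have "- laplacian E $ i $ j\<^sub>0 = 1"
    using \<open>E i j\<^sub>0\<close> irrefl entry by metis
  moreover have "- laplacian E $ i $ j = 1 \<longleftrightarrow> E i j"
    using entry[of j] irrefl by auto
  ultimately show ?thesis
    using eq_Max_range_iff[of "\<lambda>k. - laplacian E $ i $ k" 1 j\<^sub>0 j] by simp
qed

theorem lemmaF7:
  fixes E :: "'n::finite \<Rightarrow> 'n \<Rightarrow> bool" and P :: "real^'d^'n" and dk :: real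
  assumes "graph E" and "dk > 0"
    and "laplacian E = P ** transpose P"
  shows "node_identifying dk P \<and> adjacency_identifying E dk P"
proof
  have c: "1 / sqrt dk > 0" using \<open>dk > 0\<close> by simp
  have scores: "ptilde dk P (mat 1) (s *\<^sub>R mat 1) $ i $ j = (1 / sqrt dk) * (s * laplacian E $ i $ j)"
    for s i j
    by (simp add: ptilde_scaled_identity assms(3))
  show "node_identifying dk P"
    unfolding node_identifying_def
  proof (intro exI allI)
    fix i j
    show "ptilde dk P (mat 1) (mat 1) $ i $ j = Max (range (\<lambda>k. ptilde dk P (mat 1) (mat 1) $ i $ k))
      \<longleftrightarrow> i = j"
      using scores[of 1 i] scaled_eq_Max_range_iff[OF c, of "\<lambda>k. laplacian E $ i $ k" j]
        laplacian_row_Max_iff_diagonal[OF assms(1), of i j]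
      by auto
  qed
  show "adjacency_identifying E dk P"
    unfolding adjacency_identifying_def
  proof (intro exI allI)
    fix i j
    show "ptilde dk P (mat 1) (-1 *\<^sub>R mat 1) $ i $ j
        = Max (range (\<lambda>k. ptilde dk P (mat 1) (-1 *\<^sub>R mat 1) $ i $ k))
      \<longleftrightarrow> adjacency_matrix E $ i $ j = 1"
      using scores[of "-1" i] scaled_eq_Max_range_iff[OF c, of "\<lambda>k. - laplacian E $ i $ k" j]
        neg_laplacian_row_Max_iff_adjacent[OF assms(1), of i j]
      by (simp add: adjacency_matrix_def)
  qed
qed

end
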